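(* Let $F_1,\dots,F_l\in\mathfrak{M}_n^{+}$ satisfy $\sum_{j=1}^l F_j=I_n$, let $R\in\mathfrak{M}_n^{+}$ and $N\in\mathbb{N}$. Then \[ \sum_{k_1,\dots,k_N}\big\|F_{k_1}e^{R/N}F_{k_2}e^{R/N}\cdots F_{k_N}e^{R/N}\big\|\le n\,\|e^{R}\|, \] where the sum is over all $(k_1,\dots,k_N)\in\{1,\dots,l\}^N$.
   Context: $\mathfrak{M}_n^{+}$ is the set of $n\times n$ matrices all of whose entries are non-negative real numbers; $I_n$ is the identity matrix; $\|\cdot\|$ is the operator norm. *)

theory Defs
  imports "HOL-Analysis.Analysis"
begin

text \<open>n x n real matrices are rendered as real^'n^'n (n = CARD('n)).\<close>

definition nonneg_mat :: "real^'n^'n \<Rightarrow> bool" where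
  "nonneg_mat A \<longleftrightarrow> (\<forall>i j. A $ i $ j \<ge> 0)"

definition mat_pow :: "real^'n^'n \<Rightarrow> nat \<Rightarrow> real^'n^'n" where
  "mat_pow A k = (((**) A) ^^ k) (mat 1)"

definition mat_exp :: "real^'n^'n \<Rightarrow> real^'n^'n" where
  "mat_exp A = (\<Sum>k. (1 / fact k) *\<^sub>R mat_pow A k)"

definition op_norm :: "real^'n^'n \<Rightarrow> real" where
  "op_norm A = onorm (\<lambda>x. A *v x)"

definition mat_prod_list :: "(real^'n^'n) list \<Rightarrow> real^'n^'n" where
  "mat_prod_list As = foldr (**) As (mat 1)"

end

theory Submission
  imports Defs
begin

text \<open>Every word \<open>F\<^sub>k\<^sub>1 E \<cdots> F\<^sub>k\<^sub>N E\<close> with \<open>E = e\<^bsup>R/N\<^esup>\<close> is a nonnegative matrix, and for a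
nonnegative matrix the operator norm is at most the sum of its entries. Entry sums are additive,
and expanding the power of a sum into words gives
\<open>\<Sum>\<^sub>k F\<^sub>k\<^sub>1 E \<cdots> F\<^sub>k\<^sub>N E = (\<Sum>\<^sub>j F\<^sub>j E)\<^sup>N = E\<^sup>N = e\<^sup>R\<close>. Finally, the entry sum of any
matrix \<open>A\<close> is \<open>\<one> \<bullet> A \<one> \<le> n \<parallel>A\<parallel>\<close> by Cauchy-Schwarz for the all-ones vector \<open>\<one>\<close>.\<close>

lemma matrix_add_rdistrib: "(B + C) ** A = B ** A + C ** A"
  for B C :: "'a::semiring_1^'m^'n"
  by (vector matrix_matrix_mult_def sum.distrib[symmetric] field_simps)

lemma sum_matrix_mult: "(\<Sum>x\<in>S. f x) ** A = (\<Sum>x\<in>S. f x ** A)"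
  for f :: "'b \<Rightarrow> 'a::semiring_1^'m^'n"
  by (induction S rule: infinite_finite_induct) (simp_all add: matrix_add_rdistrib)

lemma op_norm_add_le: "op_norm (A + B) \<le> op_norm A + op_norm B"
proof -
  have "(*v) (A + B) = (\<lambda>x. A *v x + B *v x)"
    by (simp add: fun_eq_iff matrix_vector_mult_add_rdistrib)
  then show ?thesis
    unfolding op_norm_def by (simp add: onorm_triangle)
qed

lemma op_norm_scaleR: "op_norm (c *\<^sub>R A) = \<bar>c\<bar> * op_norm A"
proof -
  have "(*v) (c *\<^sub>R A) = (\<lambda>x. c *\<^sub>R (A *v x))"
    by (simp add: scaleR_matrix_vector_assoc)
  then show ?thesis
    unfolding op_norm_def by (simp add: onorm_scaleR)
qed

lemma op_norm_mult_le: "op_norm (A ** B) \<le> op_norm A * op_norm B"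
  using onorm_compose[of "(*v) A" "(*v) B"]
  by (simp add: op_norm_def o_def matrix_vector_mul_assoc)

lemma op_norm_mat_1: "op_norm (mat 1 :: real^'n^'n) = 1"
  by (simp add: op_norm_def onorm_id)

lemma op_norm_eq_0_iff: "op_norm A = 0 \<longleftrightarrow> A = 0"
  by (simp add: op_norm_def onorm_eq_0 matrix_eq fun_eq_iff)

lemma norm_le_card_sq_op_norm:
  fixes A :: "real^'n^'n"
  shows "norm A \<le> real CARD('n) * real CARD('n) * op_norm A"
proof -
  have "norm A \<le> (\<Sum>i\<in>UNIV. \<Sum>j\<in>UNIV. \<bar>A $ i $ j\<bar>)"
  proof -
    have "norm A \<le> (\<Sum>i\<in>UNIV. norm (A $ i))"
      by (simp add: norm_vec_def L2_set_le_sum)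
    then show ?thesis
      by (smt (verit) norm_le_l1_cart sum_mono)
  qed
  also have "\<dots> \<le> (\<Sum>i\<in>(UNIV::'n set). \<Sum>j\<in>(UNIV::'n set). op_norm A)"
    unfolding op_norm_def by (intro sum_mono matrix_component_le_onorm)
  finally show ?thesis by simp
qed

lemma op_norm_le_card_sq_norm:
  fixes A :: "real^'n^'n"
  shows "op_norm A \<le> real CARD('n) * real CARD('n) * norm A"
proof -
  have "op_norm A \<le> (\<Sum>i\<in>UNIV. \<Sum>j\<in>UNIV. \<bar>A $ i $ j\<bar>)"
    unfolding op_norm_def by (rule onorm_le_matrix_component_sum)
  also have "\<dots> \<le> (\<Sum>i\<in>(UNIV::'n set). \<Sum>j\<in>(UNIV::'n set). norm A)"
    by (intro sum_mono) (meson component_le_norm_cart Finite_Cartesian_Product.norm_nth_le order_trans)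
  finally show ?thesis by simp
qed

text \<open>Square matrices with the operator norm form a Banach algebra; through this copy of the
matrix type the library's \<open>exp\<close> and its laws become available for \<open>mat_exp\<close>.\<close>

typedef ('n::finite) sq_matrix = "UNIV :: (real^'n^'n) set"
  morphisms to_mat of_mat ..

setup_lifting type_definition_sq_matrix

instantiation sq_matrix :: (finite) real_normed_algebra_1
begin

lift_definition zero_sq_matrix :: "'a sq_matrix" is 0 .
lift_definition one_sq_matrix :: "'a sq_matrix" is "mat 1" .
lift_definition plus_sq_matrix :: "'a sq_matrix \<Rightarrow> 'a sq_matrix \<Rightarrow> 'a sq_matrix" is "(+)" .
lift_definition minus_sq_matrix :: "'a sq_matrix \<Rightarrow> 'a sq_matrix \<Rightarrow> 'a sq_matrix" is "(-)" .
lift_definition uminus_sq_matrix :: "'a sq_matrix \<Rightarrow> 'a sq_matrix" is uminus .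
lift_definition times_sq_matrix :: "'a sq_matrix \<Rightarrow> 'a sq_matrix \<Rightarrow> 'a sq_matrix" is "(**)" .
lift_definition scaleR_sq_matrix :: "real \<Rightarrow> 'a sq_matrix \<Rightarrow> 'a sq_matrix" is "(*\<^sub>R)" .
lift_definition norm_sq_matrix :: "'a sq_matrix \<Rightarrow> real" is op_norm .

definition sgn_sq_matrix :: "'a sq_matrix \<Rightarrow> 'a sq_matrix"
  where "sgn_sq_matrix A = inverse (norm A) *\<^sub>R A"
definition dist_sq_matrix :: "'a sq_matrix \<Rightarrow> 'a sq_matrix \<Rightarrow> real"
  where "dist_sq_matrix A B = norm (A - B)"
definition uniformity_sq_matrix :: "('a sq_matrix \<times> 'a sq_matrix) filter"
  where "uniformity_sq_matrix = (INF e\<in>{0 <..}. principal {(x, y). dist x y < e})"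
definition open_sq_matrix :: "'a sq_matrix set \<Rightarrow> bool"
  where "open_sq_matrix U = (\<forall>x\<in>U. \<forall>\<^sub>F (x', y) in uniformity. x' = x \<longrightarrow> y \<in> U)"

instance
proof
  fix a b c :: "'a sq_matrix" and r s :: real
  show "a + b + c = a + (b + c)" "a + b = b + a" "0 + a = a" "- a + a = 0" "a - b = a + - b"
    by (transfer; simp add: algebra_simps)+
  show "r *\<^sub>R (a + b) = r *\<^sub>R a + r *\<^sub>R b" "(r + s) *\<^sub>R a = r *\<^sub>R a + s *\<^sub>R a"
    "r *\<^sub>R s *\<^sub>R a = (r * s) *\<^sub>R a" "1 *\<^sub>R a = a"
    by (transfer; simp add: scaleR_add_right scaleR_add_left)+
  show "a * b * c = a * (b * c)" "(a + b) * c = a * c + b * c" "a * (b + c) = a * b + a * c"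
    "1 * a = a" "a * 1 = a"
    by (transfer; simp add: matrix_mul_assoc matrix_add_rdistrib matrix_add_ldistrib)+
  show "r *\<^sub>R a * b = r *\<^sub>R (a * b)" "a * r *\<^sub>R b = r *\<^sub>R (a * b)"
    by (transfer; simp add: scalar_matrix_assoc matrix_scalar_ac)+
  show "norm a = 0 \<longleftrightarrow> a = 0" "norm (a + b) \<le> norm a + norm b"
    "norm (r *\<^sub>R a) = \<bar>r\<bar> * norm a" "norm (a * b) \<le> norm a * norm b" "norm (1 :: 'a sq_matrix) = 1"
    by (transfer; simp add: op_norm_eq_0_iff op_norm_add_le op_norm_scaleR op_norm_mult_le op_norm_mat_1)+
  show "(0 :: 'a sq_matrix) \<noteq> 1"
    by transfer (metis op_norm_eq_0_iff op_norm_mat_1 zero_neq_one)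
qed (simp_all add: sgn_sq_matrix_def dist_sq_matrix_def uniformity_sq_matrix_def open_sq_matrix_def)

end

lemma bounded_linear_to_mat: "bounded_linear (to_mat :: 'n sq_matrix \<Rightarrow> real^'n^'n)"
proof (rule bounded_linear_intro[where K = "real CARD('n) * real CARD('n)"])
  show "norm (to_mat A) \<le> norm A * (real CARD('n) * real CARD('n))" for A :: "'n sq_matrix"
    using norm_le_card_sq_op_norm[of "to_mat A"] by (simp add: norm_sq_matrix.rep_eq ac_simps)
qed (simp_all add: plus_sq_matrix.rep_eq scaleR_sq_matrix.rep_eq)

lemma bounded_linear_of_mat: "bounded_linear (of_mat :: real^'n^'n \<Rightarrow> 'n sq_matrix)"
proof (rule bounded_linear_intro[where K = "real CARD('n) * real CARD('n)"])
  show "norm (of_mat A :: 'n sq_matrix) \<le> norm A * (real CARD('n) * real CARD('n))" for A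
    using op_norm_le_card_sq_norm[of A] by (simp add: norm_sq_matrix.abs_eq ac_simps)
qed (simp_all add: plus_sq_matrix.abs_eq scaleR_sq_matrix.abs_eq)

instance sq_matrix :: (finite) banach
proof
  fix X :: "nat \<Rightarrow> 'a sq_matrix"
  assume "Cauchy X"
  then have "Cauchy (\<lambda>n. to_mat (X n))"
    by (rule bounded_linear.Cauchy[OF bounded_linear_to_mat])
  then obtain L where "(\<lambda>n. to_mat (X n)) \<longlonglongrightarrow> L"
    by (auto simp: Cauchy_convergent_iff convergent_def)
  then have "(\<lambda>n. of_mat (to_mat (X n))) \<longlonglongrightarrow> of_mat L"
    by (rule bounded_linear.tendsto[OF bounded_linear_of_mat])
  then have "X \<longlonglongrightarrow> of_mat L"
    by (simp add: to_mat_inverse)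
  then show "convergent X"
    by (auto simp: convergent_def)
qed

lemma to_mat_sum: "to_mat (sum f S) = (\<Sum>x\<in>S. to_mat (f x))"
  by (induction S rule: infinite_finite_induct)
    (simp_all add: zero_sq_matrix.rep_eq plus_sq_matrix.rep_eq)

lemma to_mat_prod_list: "to_mat (prod_list As) = mat_prod_list (map to_mat As)"
  by (induction As) (simp_all add: mat_prod_list_def one_sq_matrix.rep_eq times_sq_matrix.rep_eq)

lemma to_mat_power: "to_mat (A ^ k) = mat_pow (to_mat A) k"
  by (induction k) (simp_all add: mat_pow_def one_sq_matrix.rep_eq times_sq_matrix.rep_eq)

lemma sums_mat_exp_to_mat: "(\<lambda>k. (1 / fact k) *\<^sub>R mat_pow (to_mat A) k) sums to_mat (exp A)"
proof -
  have "(\<lambda>k. to_mat (A ^ k /\<^sub>R fact k)) sums to_mat (exp A)"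
    by (rule bounded_linear.sums[OF bounded_linear_to_mat exp_converges])
  then show ?thesis
    by (simp add: scaleR_sq_matrix.rep_eq to_mat_power divide_inverse_commute)
qed

lemma mat_exp_to_mat: "mat_exp (to_mat A) = to_mat (exp A)"
  unfolding mat_exp_def by (rule sums_unique[OF sums_mat_exp_to_mat, symmetric])

lemma sums_mat_exp: "(\<lambda>k. (1 / fact k) *\<^sub>R mat_pow A k) sums mat_exp A"
  using sums_mat_exp_to_mat[of "of_mat A"] mat_exp_to_mat[of "of_mat A"]
  by (simp add: of_mat_inverse)

lemma exp_of_nat_mult_algebra:
  fixes A :: "'a::{real_normed_algebra_1,banach}"
  shows "exp (of_nat n * A) = exp A ^ n"
proof (induction n)
  case (Suc n)
  have "A * (of_nat n * A) = of_nat n * A * A"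
    by (metis mult.assoc mult_of_nat_commute)
  then have "exp (A + of_nat n * A) = exp A * exp (of_nat n * A)"
    by (rule exp_add_commuting)
  then show ?case
    using Suc by (simp add: distrib_right add.commute)
qed simp

lemma mat_pow_mat_exp:
  fixes A :: "real^'n^'n"
  shows "mat_pow (mat_exp A) n = mat_exp (real n *\<^sub>R A)"
proof -
  define B :: "'n sq_matrix" where "B = of_mat A"
  have A: "A = to_mat B"
    by (simp add: B_def of_mat_inverse)
  have "of_nat n * B = real n *\<^sub>R B"
    by (simp add: scaleR_conv_of_real)
  then have "real n *\<^sub>R A = to_mat (of_nat n * B)"
    by (simp add: A scaleR_sq_matrix.rep_eq)
  then show ?thesis
    by (simp add: A mat_exp_to_mat to_mat_power exp_of_nat_mult_algebra)
qed

lemma sum_PiE_prod_list: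
  fixes G :: "'b \<Rightarrow> 'a::semiring_1"
  shows "(\<Sum>k\<in>{0..<m} \<rightarrow>\<^sub>E S. prod_list (map (\<lambda>i. G (k i)) [0..<m])) = (\<Sum>j\<in>S. G j) ^ m"
proof (induction m)
  case (Suc m)
  let ?W = "{0..<m} \<rightarrow>\<^sub>E S"
  let ?w = "\<lambda>k. prod_list (map (\<lambda>i. G (k i)) [0..<m])"
  have words: "{0..<Suc m} \<rightarrow>\<^sub>E S = (\<lambda>(y, k). k(m := y)) ` (S \<times> ?W)"
    using PiE_insert_eq[of m "{0..<m}" "\<lambda>_. S"] by (simp add: atLeast0_lessThan_Suc)
  have inj: "inj_on (\<lambda>(y, k). k(m := y)) (S \<times> ?W)"
    using inj_combinator[of m "{0..<m}" "\<lambda>_. S"] by simp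
  have "(\<Sum>k\<in>{0..<Suc m} \<rightarrow>\<^sub>E S. prod_list (map (\<lambda>i. G (k i)) [0..<Suc m]))
      = (\<Sum>(y, k)\<in>S \<times> ?W. ?w k * G y)"
    unfolding words sum.reindex[OF inj] by (rule sum.cong)
      (auto intro!: arg_cong2[where f = "(*)"] arg_cong[where f = prod_list] map_cong)
  also have "\<dots> = (\<Sum>y\<in>S. (\<Sum>k\<in>?W. ?w k) * G y)"
    by (simp add: sum.cartesian_product[symmetric] sum_distrib_right)
  also have "\<dots> = (\<Sum>j\<in>S. G j) ^ Suc m"
    unfolding Suc sum_distrib_left[symmetric] power_Suc2 ..
  finally show ?case .
qed simp

lemma sum_PiE_mat_prod_list:
  fixes G :: "'b \<Rightarrow> real^'n^'n"
  shows "(\<Sum>k\<in>{0..<m} \<rightarrow>\<^sub>E S. mat_prod_list (map (\<lambda>i. G (k i)) [0..<m]))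
    = mat_pow (\<Sum>j\<in>S. G j) m"
proof -
  define H where "H j = (of_mat (G j) :: 'n sq_matrix)" for j
  have "mat_prod_list (map (\<lambda>i. G (k i)) xs) = to_mat (prod_list (map (\<lambda>i. H (k i)) xs))"
    for k and xs :: "nat list"
    by (simp add: H_def to_mat_prod_list o_def of_mat_inverse)
  moreover have "(\<Sum>j\<in>S. G j) = to_mat (\<Sum>j\<in>S. H j)"
    by (simp add: H_def to_mat_sum of_mat_inverse)
  ultimately show ?thesis
    by (simp add: to_mat_sum[symmetric] sum_PiE_prod_list to_mat_power)
qed

lemma nonneg_mat_mult: "nonneg_mat A \<Longrightarrow> nonneg_mat B \<Longrightarrow> nonneg_mat (A ** B)"
  by (simp add: nonneg_mat_def matrix_matrix_mult_def sum_nonneg)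

lemma nonneg_mat_1: "nonneg_mat (mat 1)"
  by (simp add: nonneg_mat_def mat_def)

lemma nonneg_mat_scaleR: "nonneg_mat A \<Longrightarrow> 0 \<le> c \<Longrightarrow> nonneg_mat (c *\<^sub>R A)"
  by (simp add: nonneg_mat_def)

lemma nonneg_mat_pow: "nonneg_mat A \<Longrightarrow> nonneg_mat (mat_pow A k)"
  by (induction k) (simp_all add: mat_pow_def nonneg_mat_1 nonneg_mat_mult)

lemma nonneg_mat_prod_list:
  "(\<And>x. x \<in> set xs \<Longrightarrow> nonneg_mat (G x)) \<Longrightarrow> nonneg_mat (mat_prod_list (map G xs))"
  by (induction xs) (simp_all add: mat_prod_list_def nonneg_mat_1 nonneg_mat_mult)

lemma nonneg_mat_exp:
  assumes "nonneg_mat A"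
  shows "nonneg_mat (mat_exp A)"
  unfolding nonneg_mat_def
proof (intro allI)
  fix i j
  have "(\<lambda>k. ((1 / fact k) *\<^sub>R mat_pow A k) $ i $ j) sums (mat_exp A $ i $ j)"
    by (intro bounded_linear.sums[OF bounded_linear_vec_nth] sums_mat_exp)
  moreover have "0 \<le> ((1 / fact k) *\<^sub>R mat_pow A k) $ i $ j" for k
    using nonneg_mat_pow[OF assms] by (simp add: nonneg_mat_def)
  ultimately show "0 \<le> mat_exp A $ i $ j"
    by (rule sums_le[OF _ sums_zero, rotated])
qed

lemma op_norm_le_entry_sum:
  assumes "nonneg_mat A"
  shows "op_norm A \<le> (\<Sum>i\<in>UNIV. \<Sum>j\<in>UNIV. A $ i $ j)"
  using onorm_le_matrix_component_sum[of A] assms by (simp add: op_norm_def nonneg_mat_def)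

lemma entry_sum_le_op_norm:
  fixes A :: "real^'n^'n"
  shows "(\<Sum>i\<in>UNIV. \<Sum>j\<in>UNIV. A $ i $ j) \<le> real CARD('n) * op_norm A"
proof -
  define u :: "real^'n" where "u = (\<chi> i. 1)"
  have "(\<Sum>i\<in>UNIV. \<Sum>j\<in>UNIV. A $ i $ j) = u \<bullet> (A *v u)"
    by (simp add: u_def inner_vec_def matrix_vector_mult_def)
  also have "\<dots> \<le> norm u * norm (A *v u)"
    by (rule norm_cauchy_schwarz)
  also have "\<dots> \<le> norm u * (op_norm A * norm u)"
    unfolding op_norm_def
    by (rule mult_left_mono[OF onorm[OF matrix_vector_mul_bounded_linear]]) simp
  also have "\<dots> = op_norm A * (norm u)\<^sup>2"
    by (simp add: power2_eq_square)
  also have "(norm u)\<^sup>2 = real CARD('n)"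
    by (simp add: power2_norm_eq_inner u_def inner_vec_def)
  finally show ?thesis
    by (simp add: mult.commute)
qed

lemma sum_op_norm_nonneg_le:
  fixes P :: "'b \<Rightarrow> real^'n^'n"
  assumes "\<And>k. k \<in> S \<Longrightarrow> nonneg_mat (P k)"
  shows "(\<Sum>k\<in>S. op_norm (P k)) \<le> real CARD('n) * op_norm (\<Sum>k\<in>S. P k)"
proof -
  have "(\<Sum>k\<in>S. op_norm (P k)) \<le> (\<Sum>k\<in>S. \<Sum>i\<in>UNIV. \<Sum>j\<in>UNIV. P k $ i $ j)"
    by (intro sum_mono op_norm_le_entry_sum assms)
  also have "\<dots> = (\<Sum>i\<in>UNIV. \<Sum>j\<in>UNIV. (\<Sum>k\<in>S. P k) $ i $ j)"
    unfolding sum_component by (subst sum.swap, rule sum.cong[OF refl], rule sum.swap)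
  also have "\<dots> \<le> real CARD('n) * op_norm (\<Sum>k\<in>S. P k)"
    by (rule entry_sum_le_op_norm)
  finally show ?thesis .
qed

theorem lemma3p4:
  fixes F :: "nat \<Rightarrow> real^'n^'n" and R :: "real^'n^'n" and l N :: nat
  assumes "\<forall>j\<in>{1..l}. nonneg_mat (F j)"
    and "(\<Sum>j=1..l. F j) = mat 1"
    and "nonneg_mat R"
    and "N \<ge> 1"
  shows "(\<Sum>k\<in>{0..<N} \<rightarrow>\<^sub>E {1..l}.
            op_norm (mat_prod_list
              (map (\<lambda>i. F (k i) ** mat_exp ((1 / real N) *\<^sub>R R)) [0..<N])))
         \<le> real CARD('n) * op_norm (mat_exp R)"
proof -
  define E where "E = mat_exp ((1 / real N) *\<^sub>R R)"
  have E: "nonneg_mat E"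
    unfolding E_def using assms(3) by (simp add: nonneg_mat_exp nonneg_mat_scaleR)
  have nonneg: "nonneg_mat (mat_prod_list (map (\<lambda>i. F (k i) ** E) [0..<N]))"
    if "k \<in> {0..<N} \<rightarrow>\<^sub>E {1..l}" for k
    using that assms(1) E by (auto simp: PiE_iff intro!: nonneg_mat_prod_list nonneg_mat_mult)
  have "(\<Sum>j=1..l. F j ** E) = E"
    using assms(2) by (simp add: sum_matrix_mult[symmetric])
  then have "(\<Sum>k\<in>{0..<N} \<rightarrow>\<^sub>E {1..l}. mat_prod_list (map (\<lambda>i. F (k i) ** E) [0..<N]))
      = mat_pow E N"
    using sum_PiE_mat_prod_list[of "\<lambda>j. F j ** E" N "{1..l}"] by simp
  also have "\<dots> = mat_exp R"
    using assms(4) by (simp add: E_def mat_pow_mat_exp)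
  finally have "(\<Sum>k\<in>{0..<N} \<rightarrow>\<^sub>E {1..l}. mat_prod_list (map (\<lambda>i. F (k i) ** E) [0..<N]))
      = mat_exp R" .
  then show ?thesis
    using sum_op_norm_nonneg_le[where S = "{0..<N} \<rightarrow>\<^sub>E {1..l}"
        and P = "\<lambda>k. mat_prod_list (map (\<lambda>i. F (k i) ** E) [0..<N])"] nonneg
    by (simp add: E_def)
qed
end
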